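(* Let $(X,\mathsf{d}_X)$ be a compact metric space and $\mathfrak{A}$ a unital C*-algebra, let $\mu$ be a state of $C(X,\mathfrak{A})$, let $q\in\{C(X),\mathbb{C},\mu\}$, and let $\|\cdot\|_{\mathsf{n}}$ be a norm on $\mathfrak{A}$ (over $\mathbb{R}$ or $\mathbb{C}$) equivalent to the C*-norm $\|\cdot\|_{\mathfrak{A}}$. Then $\mathsf{L}^{(\mathsf{n}),q}_{\mathsf{d}_X}$ is lower semi-continuous with respect to $\|\cdot\|_{C(X,\mathfrak{A})}$, the set $\{a\in C(X,\mathfrak{A}):\mathsf{L}^{(\mathsf{n}),q}_{\mathsf{d}_X}(a)<\infty\}$ is dense in $C(X,\mathfrak{A})$, and the set $\{a\in C(X,\mathfrak{A}): a=a^*,\ \mathsf{L}^{(\mathsf{n}),q}_{\mathsf{d}_X}(a)<\infty\}$ is dense in the self-adjoint part of $C(X,\mathfrak{A})$.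
   Context: $C(X,\mathfrak{A})$ is the unital C*-algebra of continuous $\mathfrak{A}$-valued functions on $X$ with pointwise operations, supremum norm, and unit the constant $1_{\mathfrak{A}}$; $C(X,\mathbb{C}1_{\mathfrak{A}})$ is the subalgebra of functions with values in $\mathbb{C}1_{\mathfrak{A}}$. For $a\in C(X,\mathfrak{A})$, $l^{(\mathsf{n})}_{\mathsf{d}_X}(a)=\sup_{x\ne y}\|a(x)-a(y)\|_{\mathsf{n}}/\mathsf{d}_X(x,y)$, and $\mathsf{L}^{(\mathsf{n}),C(X)}_{\mathsf{d}_X}(a)=\max\{l^{(\mathsf{n})}_{\mathsf{d}_X}(a),\inf_{b\in C(X,\mathbb{C}1_{\mathfrak{A}})}\|a-b\|\}$, $\mathsf{L}^{(\mathsf{n}),\mathbb{C}}_{\mathsf{d}_X}(a)=\max\{l^{(\mathsf{n})}_{\mathsf{d}_X}(a),\inf_{\lambda\in\mathbb{C}}\|a-\lambda1\|\}$, $\mathsf{L}^{(\mathsf{n}),\mu}_{\mathsf{d}_X}(a)=\max\{l^{(\mathsf{n})}_{\mathsf{d}_X}(a),\|a-\mu(a)1\|\}$, all norms being the supremum norm of $C(X,\mathfrak{A})$. *)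

theory Defs
  imports "HOL-Analysis.Analysis" "HOL-Library.Extended_Nonnegative_Real"
begin

text \<open>Unital C*-algebra: a real Banach algebra with unit (norm 1 = 1), together with a
  complex scalar multiplication extending the real one and an involution.\<close>
locale cstar_algebra =
  fixes cmult :: "complex \<Rightarrow> 'a::{real_normed_algebra_1, banach} \<Rightarrow> 'a"
    and star :: "'a \<Rightarrow> 'a"
  assumes cmult_add_right: "cmult c (x + y) = cmult c x + cmult c y"
    and cmult_add_left: "cmult (c + d) x = cmult c x + cmult d x"
    and cmult_assoc: "cmult c (cmult d x) = cmult (c * d) x"
    and cmult_of_real: "cmult (of_real r) x = r *\<^sub>R x"
    and cmult_mult_left: "cmult c (x * y) = cmult c x * y"
    and cmult_mult_right: "cmult c (x * y) = x * cmult c y"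
    and norm_cmult: "norm (cmult c x) = cmod c * norm x"
    and star_star: "star (star x) = x"
    and star_add: "star (x + y) = star x + star y"
    and star_cmult: "star (cmult c x) = cmult (cnj c) (star x)"
    and star_mult: "star (x * y) = star y * star x"
    and cstar_identity: "norm (star x * x) = (norm x)\<^sup>2"

text \<open>A norm on the algebra (over the reals; a complex norm is in particular one)
  equivalent to the C*-norm.\<close>
definition equiv_norm :: "('a::real_normed_vector \<Rightarrow> real) \<Rightarrow> bool" where
  "equiv_norm nrm \<longleftrightarrow>
     (\<forall>x y. nrm (x + y) \<le> nrm x + nrm y) \<and>
     (\<forall>r x. nrm (r *\<^sub>R x) = \<bar>r\<bar> * nrm x) \<and>
     (\<forall>x. nrm x = 0 \<longrightarrow> x = 0) \<and>
     (\<exists>c C. 0 < c \<and> 0 < C \<and> (\<forall>x. c * norm x \<le> nrm x \<and> nrm x \<le> C * norm x))"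

text \<open>States of C(X,A) (represented by the bounded continuous functions on the compact type 'x).\<close>
definition is_state ::
  "(complex \<Rightarrow> 'a \<Rightarrow> 'a) \<Rightarrow> ('a \<Rightarrow> 'a) \<Rightarrow> (('x::topological_space \<Rightarrow>\<^sub>C 'a::{real_normed_algebra_1, banach}) \<Rightarrow> complex) \<Rightarrow> bool" where
  "is_state cmult star \<mu> \<longleftrightarrow>
     (\<forall>a b. \<mu> (a + b) = \<mu> a + \<mu> b) \<and>
     (\<forall>c a b. (\<forall>x. apply_bcontfun b x = cmult c (apply_bcontfun a x)) \<longrightarrow> \<mu> b = c * \<mu> a) \<and>
     (\<forall>a b. (\<forall>x. apply_bcontfun b x = star (apply_bcontfun a x) * apply_bcontfun a x)
             \<longrightarrow> Im (\<mu> b) = 0 \<and> 0 \<le> Re (\<mu> b)) \<and>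
     \<mu> (const_bcontfun 1) = 1"

definition lipn :: "('a::real_normed_vector \<Rightarrow> real) \<Rightarrow> ('x::metric_space \<Rightarrow>\<^sub>C 'a) \<Rightarrow> ennreal" where
  "lipn nrm a = (SUP p \<in> {(x, y). x \<noteq> y}.
      ennreal (nrm (apply_bcontfun a (fst p) - apply_bcontfun a (snd p)) / dist (fst p) (snd p)))"

definition scalar_valued :: "(complex \<Rightarrow> 'a \<Rightarrow> 'a) \<Rightarrow> ('x::topological_space \<Rightarrow>\<^sub>C 'a::{real_normed_algebra_1}) \<Rightarrow> bool" where
  "scalar_valued cmult b \<longleftrightarrow> (\<forall>x. \<exists>c. apply_bcontfun b x = cmult c 1)"

definition self_adjoint :: "('a \<Rightarrow> 'a) \<Rightarrow> ('x::topological_space \<Rightarrow>\<^sub>C 'a::metric_space) \<Rightarrow> bool" where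
  "self_adjoint star a \<longleftrightarrow> (\<forall>x. star (apply_bcontfun a x) = apply_bcontfun a x)"

datatype lip_kind = QCX | QC | QMu

definition Lip_q :: "lip_kind \<Rightarrow> (complex \<Rightarrow> 'a \<Rightarrow> 'a) \<Rightarrow> ('a \<Rightarrow> real)
    \<Rightarrow> (('x::metric_space \<Rightarrow>\<^sub>C 'a::{real_normed_algebra_1, banach}) \<Rightarrow> complex)
    \<Rightarrow> ('x \<Rightarrow>\<^sub>C 'a) \<Rightarrow> ennreal" where
  "Lip_q q cmult nrm \<mu> a = max (lipn nrm a)
     (case q of
        QCX \<Rightarrow> (INF b \<in> {b. scalar_valued cmult b}. ennreal (norm (a - b)))
      | QC \<Rightarrow> (INF t::complex. ennreal (norm (a - const_bcontfun (cmult t 1))))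
      | QMu \<Rightarrow> ennreal (norm (a - const_bcontfun (cmult (\<mu> a) 1))))"

definition lower_semicont :: "('b::topological_space \<Rightarrow> ennreal) \<Rightarrow> bool" where
  "lower_semicont L \<longleftrightarrow> (\<forall>r. closed {a. L a \<le> r})"

end

(*
  A state of C(X,A) is a positive unital functional; for self-adjoint k of norm at most 1/2 the
  element 1 - k is c* c with c = sqrt (1 - k) given pointwise by the binomial series, so positivity
  yields |\<mu> k| <= 2 |k|, and splitting into real and imaginary parts gives |\<mu> a| <= 4 |a|.
  Hence each of the three seminorms is the maximum of the Lipschitz seminorm, a supremum of
  continuous functions of a, and a term that is either a distance to a set or a continuous function
  of a; all sublevel sets are therefore closed. For density, a Lipschitz partition of unity
  subordinate to a finite net of a compact X turns a into a Lipschitz function that is a pointwise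
  convex combination of values of a: it is uniformly close to a, stays self-adjoint when a is, and
  the distance terms are always finite.
*)
theory Submission
  imports Defs "HOL-Computational_Algebra.Formal_Power_Series"
begin

context cstar_algebra
begin

lemma star_scaleR: "star (r *\<^sub>R x) = r *\<^sub>R star x"
  using star_cmult[of "of_real r" x] by (simp add: cmult_of_real)

lemma norm_star: "norm (star x) = norm x"
proof -
  have "norm y \<le> norm (star y)" for y
  proof (cases "y = 0")
    case False
    have "norm y * norm y = norm (star y * y)"
      by (simp add: cstar_identity power2_eq_square)
    also have "\<dots> \<le> norm (star y) * norm y"
      by (rule norm_mult_ineq)
    finally show ?thesis
      using False by simp
  qed simp
  from this[of x] this[of "star x"] show ?thesis
    by (simp add: star_star)
qed

sublocale star: bounded_linear star
  by (rule bounded_linear_intro[of _ 1]) (auto simp: star_add star_scaleR norm_star)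

lemma star_one: "star 1 = 1"
  using star_mult[of 1 "star 1"] by (simp add: star_star)

lemma star_power: "star (x ^ n) = star x ^ n"
  by (induction n) (simp_all add: star_one star_mult power_commutes)

lemma bounded_linear_cmult: "bounded_linear (cmult c)"
proof (rule bounded_linear_intro[of _ "cmod c"])
  fix r x
  have "cmult c (r *\<^sub>R x) = cmult (of_real r) (cmult c x)"
    by (metis cmult_assoc cmult_of_real mult.commute)
  then show "cmult c (r *\<^sub>R x) = r *\<^sub>R cmult c x"
    by (simp add: cmult_of_real)
qed (auto simp: cmult_add_right norm_cmult)

lemma bounded_linear_cmult_left: "bounded_linear (\<lambda>c. cmult c x)"
  by (rule bounded_linear_intro[of _ "norm x"])
    (auto simp: cmult_add_left norm_cmult mult.commute,
     metis cmult_assoc cmult_of_real scaleR_conv_of_real)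

lemma cmult_minus: "cmult c (- x) = cmult (- c) x"
proof -
  have "cmult c (- x) = cmult c (cmult (of_real (-1)) x)"
    using cmult_of_real[of "-1" x] by simp
  then show ?thesis
    by (simp add: cmult_assoc)
qed

definition re_part :: "'a \<Rightarrow> 'a" where
  "re_part x = (1/2) *\<^sub>R (x + star x)"

definition im_part :: "'a \<Rightarrow> 'a" where
  "im_part x = cmult (- \<i> / 2) (x - star x)"

lemma star_re_part: "star (re_part x) = re_part x"
  by (simp add: re_part_def star_add star_scaleR star_star add.commute)

lemma star_im_part: "star (im_part x) = im_part x"
proof -
  have "star (im_part x) = cmult (\<i> / 2) (- (x - star x))"
    by (simp add: im_part_def star_cmult star.diff star_star)
  also have "\<dots> = im_part x"
    unfolding cmult_minus im_part_def by simp
  finally show ?thesis .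
qed

lemma re_part_plus_im_part: "re_part x + cmult \<i> (im_part x) = x"
proof -
  have "cmult \<i> (im_part x) = (1/2) *\<^sub>R (x - star x)"
    by (simp add: im_part_def cmult_assoc flip: cmult_of_real)
  then have "re_part x + cmult \<i> (im_part x) = (1/2) *\<^sub>R ((x + star x) + (x - star x))"
    by (simp only: re_part_def scaleR_add_right)
  then show ?thesis
    by simp
qed

lemma norm_re_part_le: "norm (re_part x) \<le> norm x"
  using norm_triangle_ineq[of x "star x"] by (simp add: re_part_def norm_star)

lemma norm_im_part_le: "norm (im_part x) \<le> norm x"
  using norm_triangle_ineq4[of x "star x"] by (simp add: im_part_def norm_cmult norm_star)

lemma continuous_on_re_part: "continuous_on S re_part"
  unfolding re_part_def[abs_def] by (intro continuous_intros star.continuous_on)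

lemma continuous_on_im_part: "continuous_on S im_part"
  unfolding im_part_def[abs_def]
  by (intro bounded_linear.continuous_on[OF bounded_linear_cmult] continuous_intros star.continuous_on)

end

lemma abs_gbinomial_half_le_one: "\<bar>(1/2::real) gchoose n\<bar> \<le> 1"
proof (induction n)
  case (Suc k)
  have "(1/2::real) * ((1/2) gchoose k) = of_nat k * ((1/2) gchoose k) + of_nat (Suc k) * ((1/2) gchoose Suc k)"
    by (rule gbinomial_mult_1)
  then have "(1/2::real) gchoose Suc k = (1/2 - real k) * ((1/2) gchoose k) / real (Suc k)"
    by (simp add: field_simps del: of_nat_Suc)
  then have "\<bar>(1/2::real) gchoose Suc k\<bar> = \<bar>1/2 - real k\<bar> * \<bar>(1/2) gchoose k\<bar> / real (Suc k)"
    by (simp add: abs_mult)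
  also have "\<dots> \<le> real (Suc k) * 1 / real (Suc k)"
    by (intro divide_right_mono mult_mono Suc) auto
  finally show ?case
    by simp
qed simp

definition sqrt_one_minus :: "'a::{real_normed_algebra_1, banach} \<Rightarrow> 'a" where
  "sqrt_one_minus y = (\<Sum>n. ((1/2) gchoose n) *\<^sub>R (- y) ^ n)"

lemma norm_sqrt_one_minus_term_le:
  fixes y :: "'a::{real_normed_algebra_1, banach}"
  assumes "norm y \<le> 1/2"
  shows "norm (((1/2) gchoose n) *\<^sub>R (- y) ^ n) \<le> (1/2) ^ n"
proof -
  have "norm (((1/2) gchoose n) *\<^sub>R (- y) ^ n) = \<bar>(1/2) gchoose n\<bar> * norm ((- y) ^ n)"
    by simp
  also have "\<dots> \<le> 1 * norm (- y) ^ n"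
    by (intro mult_mono abs_gbinomial_half_le_one norm_power_ineq) auto
  also have "\<dots> \<le> (1/2) ^ n"
    using assms by (simp add: power_mono)
  finally show ?thesis .
qed

lemma summable_norm_sqrt_one_minus:
  fixes y :: "'a::{real_normed_algebra_1, banach}"
  assumes "norm y \<le> 1/2"
  shows "summable (\<lambda>n. norm (((1/2) gchoose n) *\<^sub>R (- y) ^ n))"
  by (rule summable_comparison_test[OF _ summable_geometric[of "1/2::real"]])
    (use norm_sqrt_one_minus_term_le[OF assms] in auto)

lemma sqrt_one_minus_squared:
  fixes y :: "'a::{real_normed_algebra_1, banach}"
  assumes "norm y \<le> 1/2"
  shows "sqrt_one_minus y * sqrt_one_minus y = 1 - y"
proof -
  let ?t = "\<lambda>n. ((1/2::real) gchoose n) *\<^sub>R (- y) ^ n"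
  have "sqrt_one_minus y * sqrt_one_minus y = (\<Sum>k. \<Sum>i\<le>k. ?t i * ?t (k - i))"
    unfolding sqrt_one_minus_def
    using Cauchy_product[OF summable_norm_sqrt_one_minus[OF assms] summable_norm_sqrt_one_minus[OF assms]] .
  also have "\<dots> = (\<Sum>k. ((1::real) gchoose k) *\<^sub>R (- y) ^ k)"
  proof (rule suminf_cong)
    fix k
    have "(\<Sum>i\<le>k. ?t i * ?t (k - i)) = (\<Sum>i\<le>k. ((1/2) gchoose i) * ((1/2) gchoose (k - i))) *\<^sub>R (- y) ^ k"
      by (auto simp: scaleR_sum_left simp flip: power_add intro!: sum.cong)
    also have "(\<Sum>i\<le>k. ((1/2::real) gchoose i) * ((1/2) gchoose (k - i))) = (1/2 + 1/2) gchoose k"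
      unfolding atMost_atLeast0 by (rule gbinomial_Vandermonde)
    finally show "(\<Sum>i\<le>k. ?t i * ?t (k - i)) = ((1::real) gchoose k) *\<^sub>R (- y) ^ k"
      by simp
  qed
  also have "\<dots> = (\<Sum>k\<in>{0, 1}. ((1::real) gchoose k) *\<^sub>R (- y) ^ k)"
  proof (rule suminf_finite)
    have "(1::real) gchoose k = of_nat (1 choose k)" for k
      by (metis binomial_gbinomial of_nat_1)
    then show "((1::real) gchoose k) *\<^sub>R (- y) ^ k = 0" if "k \<notin> {0, 1}" for k
      using that by (simp add: binomial_eq_0)
  qed simp
  also have "\<dots> = 1 - y"
    by simp
  finally show ?thesis .
qed

lemma continuous_on_sqrt_one_minus:
  "continuous_on (cball 0 (1/2)) (sqrt_one_minus :: 'a::{real_normed_algebra_1, banach} \<Rightarrow> 'a)"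
proof -
  have "uniform_limit (cball 0 (1/2)) (\<lambda>n y. \<Sum>i<n. ((1/2) gchoose i) *\<^sub>R (- y) ^ i)
      (\<lambda>y::'a. \<Sum>i. ((1/2) gchoose i) *\<^sub>R (- y) ^ i) sequentially"
    by (rule Weierstrass_m_test[OF _ summable_geometric[of "1/2::real"]])
      (metis mem_cball_0 norm_sqrt_one_minus_term_le, simp)
  then show ?thesis
    unfolding sqrt_one_minus_def[abs_def]
    by (rule uniform_limit_theorem[rotated]) (auto intro!: always_eventually continuous_intros)
qed

lemma (in cstar_algebra) star_sqrt_one_minus:
  assumes "norm y \<le> 1/2" and "star y = y"
  shows "star (sqrt_one_minus y) = sqrt_one_minus y"
proof -
  have "summable (\<lambda>n. ((1/2) gchoose n) *\<^sub>R (- y) ^ n)"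
    by (rule summable_norm_cancel[OF summable_norm_sqrt_one_minus[OF assms(1)]])
  then show ?thesis
    unfolding sqrt_one_minus_def
    by (simp add: star.suminf star_scaleR star_power star.neg assms(2))
qed

lemma apply_Bcontfun_compact:
  assumes "compact (UNIV :: 'x::topological_space set)"
    and "continuous_on UNIV (f :: 'x \<Rightarrow> 'b::metric_space)"
  shows "apply_bcontfun (Bcontfun f) = f"
  using assms compact_continuous_image compact_imp_bounded
  by (intro Bcontfun_inverse) (auto simp: bcontfun_def)

locale cstar_state = cstar_algebra cmult star
  for cmult :: "complex \<Rightarrow> 'a::{real_normed_algebra_1, banach} \<Rightarrow> 'a" and star +
  fixes \<mu> :: "('x::metric_space \<Rightarrow>\<^sub>C 'a) \<Rightarrow> complex"
  assumes state: "is_state cmult star \<mu>"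
    and compact_UNIV: "compact (UNIV :: 'x set)"
begin

lemmas apply_Bcontfun = apply_Bcontfun_compact[OF compact_UNIV]

lemma state_add: "\<mu> (a + b) = \<mu> a + \<mu> b"
  using state unfolding is_state_def by blast

lemma state_cmult:
  assumes "\<And>x. apply_bcontfun b x = cmult c (apply_bcontfun a x)"
  shows "\<mu> b = c * \<mu> a"
proof -
  have "\<forall>c a b. (\<forall>x. apply_bcontfun b x = cmult c (apply_bcontfun a x)) \<longrightarrow> \<mu> b = c * \<mu> a"
    using state by (simp add: is_state_def)
  with assms show ?thesis
    by blast
qed

lemma state_unit: "\<mu> (const_bcontfun 1) = 1"
  using state unfolding is_state_def by blast

lemma state_scaleR: "\<mu> (r *\<^sub>R a) = r *\<^sub>R \<mu> a"
  using state_cmult[of "r *\<^sub>R a" "of_real r" a] by (simp add: cmult_of_real scaleR_conv_of_real)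

definition star_mult_self :: "('x \<Rightarrow>\<^sub>C 'a) \<Rightarrow> ('x \<Rightarrow>\<^sub>C 'a)" where
  "star_mult_self a = Bcontfun (\<lambda>x. star (a x) * a x)"

lemma star_mult_self_apply: "apply_bcontfun (star_mult_self a) x = star (a x) * a x"
proof -
  have "continuous_on UNIV (\<lambda>x. star (a x) * a x)"
    by (intro continuous_on_mult star.continuous_on continuous_on_apply_bcontfun)
  then show ?thesis
    by (simp add: star_mult_self_def apply_Bcontfun)
qed

lemma state_star_mult_self: "Im (\<mu> (star_mult_self a)) = 0" "0 \<le> Re (\<mu> (star_mult_self a))"
  using state star_mult_self_apply unfolding is_state_def by blast+

lemma state_self_adjoint_real:
  assumes "self_adjoint star k"
  shows "Im (\<mu> k) = 0"
proof -
  have "star_mult_self (const_bcontfun 1 + k) = const_bcontfun 1 + 2 *\<^sub>R k + star_mult_self k"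
    using assms
    by (intro bcontfun_eqI) (simp add: self_adjoint_def star_mult_self_apply star_add star_one algebra_simps scaleR_2)
  then have "Im (\<mu> (star_mult_self (const_bcontfun 1 + k))) = 2 * Im (\<mu> k) + Im (\<mu> (star_mult_self k))"
    by (simp add: state_add state_scaleR state_unit)
  then show ?thesis
    by (simp add: state_star_mult_self)
qed

lemma state_self_adjoint_le_one:
  assumes "self_adjoint star k" and "norm k \<le> 1/2"
  shows "Re (\<mu> k) \<le> 1"
proof -
  have k: "norm (k x) \<le> 1/2" "star (k x) = k x" for x
    using assms norm_bounded[of k x] by (auto simp: self_adjoint_def)
  have "continuous_on UNIV (\<lambda>x. sqrt_one_minus (k x))"
    by (rule continuous_on_compose2[OF continuous_on_sqrt_one_minus]) (use k in auto)
  then have "star_mult_self (Bcontfun (\<lambda>x. sqrt_one_minus (k x))) = const_bcontfun 1 - k"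
    by (intro bcontfun_eqI)
      (simp add: star_mult_self_apply apply_Bcontfun star_sqrt_one_minus[OF k] sqrt_one_minus_squared[OF k(1)])
  then have "0 \<le> Re (\<mu> (const_bcontfun 1 - k))"
    by (metis state_star_mult_self(2))
  moreover have "\<mu> (const_bcontfun 1 - k) = 1 - \<mu> k"
    using state_add[of "const_bcontfun 1 - k" k] state_unit by (metis diff_add_cancel eq_diff_eq)
  ultimately show ?thesis
    by simp
qed

lemma norm_state_self_adjoint_le:
  assumes "self_adjoint star k"
  shows "cmod (\<mu> k) \<le> 2 * norm k"
proof (cases "k = 0")
  case True
  then show ?thesis
    using state_scaleR[of 0 0] by simp
next
  case False
  define k' where "k' = (1 / (2 * norm k)) *\<^sub>R k"
  have sa: "self_adjoint star k'" "self_adjoint star (- k')"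
    using assms by (simp_all add: k'_def self_adjoint_def star_scaleR star.neg)
  have "norm k' = 1/2"
    using False by (simp add: k'_def)
  then have "Re (\<mu> k') \<le> 1" "Re (\<mu> (- k')) \<le> 1"
    using state_self_adjoint_le_one[OF sa(1)] state_self_adjoint_le_one[OF sa(2)] by simp_all
  moreover have "\<mu> (- k') = - \<mu> k'"
    using state_scaleR[of "-1" k'] by simp
  ultimately have "cmod (\<mu> k') \<le> 1"
    using state_self_adjoint_real[OF sa(1)] by (simp add: cmod_def abs_le_iff)
  moreover have "cmod (\<mu> k') = cmod (\<mu> k) / (2 * norm k)"
    by (simp add: k'_def state_scaleR)
  ultimately show ?thesis
    using False by (simp add: divide_le_eq)
qed

lemma norm_state_le: "cmod (\<mu> a) \<le> 4 * norm a"
proof -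
  have cont: "continuous_on UNIV (\<lambda>x. re_part (a x))" "continuous_on UNIV (\<lambda>x. im_part (a x))"
    "continuous_on UNIV (\<lambda>x. cmult \<i> (im_part (a x)))"
    by (auto intro!: continuous_on_compose2[OF continuous_on_re_part] continuous_on_compose2[OF continuous_on_im_part]
        bounded_linear.continuous_on[OF bounded_linear_cmult])
  define h where "h = Bcontfun (\<lambda>x. re_part (a x))"
  define k where "k = Bcontfun (\<lambda>x. im_part (a x))"
  define g where "g = Bcontfun (\<lambda>x. cmult \<i> (im_part (a x)))"
  have "a = h + g"
    by (rule bcontfun_eqI) (simp add: h_def g_def apply_Bcontfun cont re_part_plus_im_part)
  moreover have "\<mu> g = \<i> * \<mu> k"
    by (rule state_cmult) (simp add: g_def k_def apply_Bcontfun cont)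
  ultimately have "cmod (\<mu> a) \<le> cmod (\<mu> h) + cmod (\<mu> k)"
    by (simp add: state_add norm_triangle_le norm_mult)
  moreover have "self_adjoint star h" "self_adjoint star k"
    by (simp_all add: self_adjoint_def h_def k_def apply_Bcontfun cont star_re_part star_im_part)
  moreover have "norm h \<le> norm a" "norm k \<le> norm a"
    by (auto intro!: norm_bound order_trans[OF norm_re_part_le norm_bounded]
        order_trans[OF norm_im_part_le norm_bounded] simp: h_def k_def apply_Bcontfun cont)
  ultimately show ?thesis
    using norm_state_self_adjoint_le[of h] norm_state_self_adjoint_le[of k] by linarith
qed

lemma bounded_linear_state: "bounded_linear \<mu>"
proof (rule bounded_linear_intro[of _ 4])
  show "cmod (\<mu> a) \<le> norm a * 4" for a
    using norm_state_le[of a] by linarith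
qed (simp_all add: state_add state_scaleR)

end

lemma lower_semicont_ennreal:
  fixes f :: "'b::topological_space \<Rightarrow> real"
  assumes "continuous_on UNIV f"
  shows "lower_semicont (\<lambda>a. ennreal (f a))"
  unfolding lower_semicont_def
  by (intro allI closed_Collect_le continuous_on_ennreal assms continuous_on_const)

lemma lower_semicont_SUP:
  assumes "\<And>i. i \<in> I \<Longrightarrow> lower_semicont (F i)"
  shows "lower_semicont (\<lambda>a. SUP i\<in>I. F i a)"
proof -
  have "{a. (SUP i\<in>I. F i a) \<le> r} = (\<Inter>i\<in>I. {a. F i a \<le> r})" for r
    by (auto simp: SUP_le_iff)
  then show ?thesis
    using assms by (auto simp: lower_semicont_def intro!: closed_INT)
qed

lemma lower_semicont_max:
  assumes "lower_semicont f" and "lower_semicont g"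
  shows "lower_semicont (\<lambda>a. max (f a) (g a))"
proof -
  have "{a. max (f a) (g a) \<le> r} = {a. f a \<le> r} \<inter> {a. g a \<le> r}" for r
    by auto
  then show ?thesis
    using assms by (auto simp: lower_semicont_def intro!: closed_Int)
qed

lemma lower_semicont_INF_dist:
  fixes S :: "'b::metric_space set"
  shows "lower_semicont (\<lambda>a. INF b\<in>S. ennreal (dist a b))"
proof (cases "S = {}")
  case True
  have "{a :: 'b. top \<le> r} = (if top \<le> r then UNIV else {})" for r :: ennreal
    by auto
  then show ?thesis
    using True by (simp add: lower_semicont_def)
next
  case False
  have "ennreal (Inf (dist a ` S)) = (INF d\<in>dist a ` S. ennreal d)" for a
    using False
    by (intro continuous_at_Inf_mono)
      (auto intro!: monoI ennreal_leI
        simp: continuous_at_imp_continuous_at_within bounded_imp_bdd_below bounded_dist_comp)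
  then have "(INF b\<in>S. ennreal (dist a b)) = ennreal (infdist a S)" for a
    using False by (simp add: infdist_def image_comp o_def)
  then show ?thesis
    by (simp add: lower_semicont_ennreal continuous_on_infdist continuous_on_id)
qed

lemma continuous_on_equiv_norm:
  assumes "equiv_norm nrm"
  shows "continuous_on UNIV nrm"
proof -
  obtain C where C: "0 < C" "\<And>x. nrm x \<le> C * norm x"
    using assms unfolding equiv_norm_def by blast
  have tri: "nrm (x + y) \<le> nrm x + nrm y" and neg: "nrm (- x) = nrm x" for x y
    using assms unfolding equiv_norm_def by (auto dest: spec[of _ "-1"])
  have "dist (nrm x) (nrm y) \<le> C * dist x y" for x y
  proof -
    have "nrm x \<le> nrm y + nrm (x - y)" "nrm y \<le> nrm x + nrm (y - x)"
      using tri[of y "x - y"] tri[of x "y - x"] by simp_all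
    moreover have "nrm (y - x) = nrm (x - y)"
      using neg[of "x - y"] by simp
    ultimately have "\<bar>nrm x - nrm y\<bar> \<le> nrm (x - y)"
      by linarith
    then show ?thesis
      using C(2)[of "x - y"] by (simp add: dist_real_def dist_norm)
  qed
  then have "C-lipschitz_on UNIV nrm"
    using C(1) by (intro lipschitz_onI) auto
  then show ?thesis
    by (rule lipschitz_on_continuous_on)
qed

lemma bounded_linear_apply_bcontfun_at:
  "bounded_linear (\<lambda>f :: 'x::topological_space \<Rightarrow>\<^sub>C 'b::real_normed_vector. apply_bcontfun f x)"
  by (rule bounded_linear_intro[of _ 1]) (simp_all add: norm_bounded)

lemma bounded_linear_const_bcontfun:
  "bounded_linear (const_bcontfun :: 'b::real_normed_vector \<Rightarrow> 'x::topological_space \<Rightarrow>\<^sub>C 'b)"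
  by (rule bounded_linear_intro[of _ 1]) (auto intro!: bcontfun_eqI norm_bound)

lemma lower_semicont_lipn:
  assumes "equiv_norm nrm"
  shows "lower_semicont (lipn nrm :: ('x::metric_space \<Rightarrow>\<^sub>C 'b::real_normed_vector) \<Rightarrow> ennreal)"
proof -
  have "continuous_on UNIV (\<lambda>a :: 'x \<Rightarrow>\<^sub>C 'b. nrm (apply_bcontfun a x - apply_bcontfun a y) / dist x y)"
    if "x \<noteq> y" for x y
    using that
    by (intro continuous_on_divide continuous_on_const continuous_on_compose2[OF continuous_on_equiv_norm[OF assms]]
        continuous_on_diff bounded_linear.continuous_on[OF bounded_linear_apply_bcontfun_at] continuous_on_id) auto
  then show ?thesis
    unfolding lipn_def[abs_def]
    by (intro lower_semicont_SUP lower_semicont_ennreal) auto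
qed

lemma (in cstar_state) lower_semicont_Lip_q:
  assumes "equiv_norm nrm"
  shows "lower_semicont (Lip_q q cmult nrm \<mu>)"
  unfolding Lip_q_def
proof (intro lower_semicont_max lower_semicont_lipn[OF assms])
  have "continuous_on UNIV (\<lambda>a. norm (a - const_bcontfun (cmult (\<mu> a) 1)))"
    by (intro continuous_on_norm continuous_on_diff continuous_on_id
        bounded_linear.continuous_on[OF bounded_linear_const_bcontfun]
        bounded_linear.continuous_on[OF bounded_linear_cmult_left]
        bounded_linear.continuous_on[OF bounded_linear_state])
  moreover have "(INF t. ennreal (norm (a - const_bcontfun (cmult t 1)))) =
      (INF b\<in>range (\<lambda>t. const_bcontfun (cmult t 1)). ennreal (dist a b))" for a :: "'x \<Rightarrow>\<^sub>C 'a"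
    by (simp add: image_comp o_def dist_norm)
  ultimately show "lower_semicont (\<lambda>a. case q of
        QCX \<Rightarrow> INF b\<in>{b. scalar_valued cmult b}. ennreal (norm (a - b))
      | QC \<Rightarrow> INF t. ennreal (norm (a - const_bcontfun (cmult t 1)))
      | QMu \<Rightarrow> ennreal (norm (a - const_bcontfun (cmult (\<mu> a) 1))))"
    using lower_semicont_INF_dist[of "{b. scalar_valued cmult b}"]
      lower_semicont_INF_dist[of "range (\<lambda>t. const_bcontfun (cmult t 1))"]
    by (cases q) (simp_all add: lower_semicont_ennreal dist_norm)
qed

lemma lipschitz_on_sum:
  fixes f :: "'i \<Rightarrow> 'x::metric_space \<Rightarrow> 'b::real_normed_vector"
  assumes "finite K" and "\<And>i. i \<in> K \<Longrightarrow> (L i)-lipschitz_on X (f i)"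
  shows "(\<Sum>i\<in>K. L i)-lipschitz_on X (\<lambda>x. \<Sum>i\<in>K. f i x)"
  using assms
proof (induction K rule: finite_induct)
  case empty
  then show ?case
    by (simp add: lipschitz_on_constant)
next
  case (insert i K)
  then show ?case
    by (simp add: lipschitz_on_add)
qed

lemma lipschitz_on_scaleR_const:
  assumes "L-lipschitz_on X f"
  shows "(L * norm v)-lipschitz_on X (\<lambda>x. f x *\<^sub>R v)"
proof (rule lipschitz_onI)
  fix x y assume "x \<in> X" "y \<in> X"
  then have "\<bar>f x - f y\<bar> * norm v \<le> L * dist x y * norm v"
    using lipschitz_onD[OF assms] by (intro mult_right_mono) (auto simp: dist_real_def)
  then show "dist (f x *\<^sub>R v) (f y *\<^sub>R v) \<le> L * norm v * dist x y"
    by (simp add: dist_norm mult_ac flip: scaleR_diff_left)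
qed (use lipschitz_on_nonneg[OF assms] in simp)

lemma lipschitz_on_divide:
  fixes f g :: "'x::metric_space \<Rightarrow> real"
  assumes "A-lipschitz_on X f" and "B-lipschitz_on X g"
    and "\<And>x. x \<in> X \<Longrightarrow> \<bar>f x\<bar> \<le> F" and "0 \<le> F"
    and "\<And>x. x \<in> X \<Longrightarrow> m \<le> g x" and "0 < m"
  shows "(A / m + F * B / m\<^sup>2)-lipschitz_on X (\<lambda>x. f x / g x)"
proof (rule lipschitz_onI)
  fix x y assume x: "x \<in> X" and y: "y \<in> X"
  have g: "m \<le> g x" "m \<le> g y"
    using assms(5) x y by auto
  have "f x / g x - f y / g y = (f x - f y) / g x + f y * (g y - g x) / (g x * g y)"
    using g \<open>0 < m\<close> by (simp add: field_simps)
  then have "dist (f x / g x) (f y / g y) \<le> \<bar>(f x - f y) / g x\<bar> + \<bar>f y * (g y - g x) / (g x * g y)\<bar>"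
    unfolding dist_real_def by (simp only: abs_triangle_ineq)
  also have "\<dots> \<le> A * dist x y / m + F * (B * dist x y) / (m * m)"
  proof (rule add_mono)
    show "\<bar>(f x - f y) / g x\<bar> \<le> A * dist x y / m"
      using lipschitz_onD[OF assms(1) x y] g \<open>0 < m\<close> lipschitz_on_nonneg[OF assms(1)]
      by (auto simp: abs_divide dist_real_def intro!: frac_le)
    show "\<bar>f y * (g y - g x) / (g x * g y)\<bar> \<le> F * (B * dist x y) / (m * m)"
      using lipschitz_onD[OF assms(2) y x] assms(3)[OF y] g \<open>0 < m\<close> \<open>0 \<le> F\<close>
      by (auto simp: abs_divide abs_mult dist_real_def dist_commute intro!: frac_le mult_mono mult_pos_pos)
  qed
  also have "\<dots> = (A / m + F * B / m\<^sup>2) * dist x y"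
    using \<open>0 < m\<close> by (simp add: power2_eq_square field_simps)
  finally show "dist (f x / g x) (f y / g y) \<le> (A / m + F * B / m\<^sup>2) * dist x y" .
qed (use lipschitz_on_nonneg[OF assms(1)] lipschitz_on_nonneg[OF assms(2)] assms(4,6) in simp)

lemma lipschitz_on_tent: "1-lipschitz_on X (\<lambda>x. max 0 (r - dist x p))"
proof (rule lipschitz_onI)
  fix x y
  have "dist (max 0 (r - dist x p)) (max 0 (r - dist y p)) \<le> \<bar>dist x p - dist y p\<bar>"
    unfolding dist_real_def by (auto simp: max_def abs_if)
  also have "\<dots> \<le> dist x y"
    using dist_triangle[of x p y] dist_triangle[of y p x] dist_commute[of x y] by linarith
  finally show "dist (max 0 (r - dist x p)) (max 0 (r - dist y p)) \<le> 1 * dist x y"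
    by simp
qed simp

lemma lipschitz_partition_of_unity:
  fixes \<delta> :: real
  assumes "compact (UNIV :: 'x set)" and "0 < \<delta>"
  obtains K :: "'x::metric_space set" and w :: "'x \<Rightarrow> 'x \<Rightarrow> real" and M
  where "finite K" and "\<And>p x. 0 \<le> w p x" and "\<And>x. (\<Sum>p\<in>K. w p x) = 1"
    and "\<And>p x. w p x \<noteq> 0 \<Longrightarrow> dist p x < \<delta>" and "\<And>p. M-lipschitz_on UNIV (w p)"
proof -
  obtain K :: "'x set" where K: "finite K" "UNIV \<subseteq> (\<Union>p\<in>K. ball p (\<delta>/2))"
  proof (rule compactE_image[OF assms(1), of UNIV "\<lambda>p. ball p (\<delta>/2)"])
    show "UNIV \<subseteq> (\<Union>p. ball p (\<delta>/2))"
      using assms(2) by auto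
  qed (auto intro: that)
  define \<psi> where "\<psi> p x = max 0 (\<delta> - dist x p)" for p x :: 'x
  define S where "S x = (\<Sum>p\<in>K. \<psi> p x)" for x
  have \<psi>_lipschitz: "1-lipschitz_on UNIV (\<psi> p)" for p
    unfolding \<psi>_def[abs_def] by (rule lipschitz_on_tent)
  have \<psi>_bound: "\<bar>\<psi> p x\<bar> \<le> \<delta>" for p x
    using assms(2) by (simp add: \<psi>_def)
  have S_ge: "\<delta>/2 \<le> S x" for x
  proof -
    obtain p where p: "p \<in> K" "dist p x < \<delta>/2"
      using K(2) by (auto simp: subset_eq)
    then have "\<delta>/2 \<le> \<psi> p x"
      by (auto simp: \<psi>_def dist_commute max_def)
    also have "\<psi> p x \<le> S x"
      unfolding S_def by (rule member_le_sum[OF p(1) _ K(1)]) (simp add: \<psi>_def)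
    finally show ?thesis .
  qed
  have S_pos: "0 < S x" for x
    using S_ge[of x] assms(2) by linarith
  define w where "w p x = \<psi> p x / S x" for p x
  have "(real (card K))-lipschitz_on UNIV S"
    using lipschitz_on_sum[OF K(1) \<psi>_lipschitz] by (simp add: S_def[abs_def])
  then have w_lipschitz: "(1 / (\<delta>/2) + \<delta> * real (card K) / (\<delta>/2)\<^sup>2)-lipschitz_on UNIV (w p)" for p
    unfolding w_def[abs_def]
    by (rule lipschitz_on_divide[OF \<psi>_lipschitz _ \<psi>_bound]) (use assms(2) S_ge in auto)
  have w_nonneg: "0 \<le> w p x" for p x
    using S_pos[of x] by (simp add: w_def \<psi>_def)
  have w_sum: "(\<Sum>p\<in>K. w p x) = 1" for x
    using S_pos[of x] by (simp add: w_def S_def flip: sum_divide_distrib)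
  have w_support: "dist p x < \<delta>" if "w p x \<noteq> 0" for p x
    using that by (auto simp: w_def \<psi>_def dist_commute max_def split: if_splits)
  show ?thesis
    by (rule that[OF K(1) w_nonneg w_sum w_support w_lipschitz])
qed

lemma norm_convex_combination_diff_le:
  fixes v :: "'i \<Rightarrow> 'b::real_normed_vector"
  assumes "\<And>p. p \<in> K \<Longrightarrow> 0 \<le> w p" and "(\<Sum>p\<in>K. w p) = 1"
    and "\<And>p. p \<in> K \<Longrightarrow> w p \<noteq> 0 \<Longrightarrow> norm (v p - u) \<le> r"
  shows "norm ((\<Sum>p\<in>K. w p *\<^sub>R v p) - u) \<le> r"
proof -
  have "(\<Sum>p\<in>K. w p *\<^sub>R v p) - u = (\<Sum>p\<in>K. w p *\<^sub>R (v p - u))"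
    by (simp add: scaleR_diff_right sum_subtractf assms(2) flip: scaleR_sum_left)
  also have "norm \<dots> \<le> (\<Sum>p\<in>K. w p * r)"
  proof (rule order_trans[OF norm_sum sum_mono])
    fix p assume "p \<in> K"
    then have "w p * norm (v p - u) \<le> w p * r"
      using assms(1,3) by (cases "w p = 0") (auto intro: mult_left_mono)
    then show "norm (w p *\<^sub>R (v p - u)) \<le> w p * r"
      using assms(1)[OF \<open>p \<in> K\<close>] by simp
  qed
  also have "\<dots> = r"
    by (simp add: assms(2) flip: sum_distrib_right)
  finally show ?thesis .
qed

lemma lipschitz_approximation:
  fixes a :: "'x::metric_space \<Rightarrow>\<^sub>C 'b::real_normed_vector"
  assumes "compact (UNIV :: 'x set)" and "0 < e"
  obtains f K and w :: "'x \<Rightarrow> 'x \<Rightarrow> real" and L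
  where "dist f a < e" and "L-lipschitz_on UNIV (apply_bcontfun f)"
    and "\<And>x. apply_bcontfun f x = (\<Sum>p\<in>K. w p x *\<^sub>R apply_bcontfun a p)"
proof -
  have "uniformly_continuous_on UNIV (apply_bcontfun a)"
    by (rule compact_uniformly_continuous[OF continuous_on_apply_bcontfun assms(1)])
  then have "\<exists>\<delta>>0. \<forall>x x'. dist x' x < \<delta> \<longrightarrow> dist (a x') (a x) < e/2"
    unfolding uniformly_continuous_on_def by (elim allE[of _ "e/2"]) (simp add: assms(2))
  then obtain \<delta> where \<delta>: "0 < \<delta>" "\<And>x x'. dist x' x < \<delta> \<Longrightarrow> dist (a x') (a x) < e/2"
    by blast
  show ?thesis
  proof (rule lipschitz_partition_of_unity[OF assms(1) \<delta>(1)])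
    fix K :: "'x set" and w :: "'x \<Rightarrow> 'x \<Rightarrow> real" and M :: real
    assume K: "finite K" "\<And>p x. 0 \<le> w p x" "\<And>x. (\<Sum>p\<in>K. w p x) = 1"
      "\<And>p x. w p x \<noteq> 0 \<Longrightarrow> dist p x < \<delta>" "\<And>p. M-lipschitz_on UNIV (w p)"
    define f where "f x = (\<Sum>p\<in>K. w p x *\<^sub>R a p)" for x
    have lip: "(\<Sum>p\<in>K. M * norm (a p))-lipschitz_on UNIV f"
      unfolding f_def by (intro lipschitz_on_sum K(1) lipschitz_on_scaleR_const K(5))
    then have f_apply: "apply_bcontfun (Bcontfun f) = f"
      by (intro apply_Bcontfun_compact assms(1) lipschitz_on_continuous_on)
    have "norm (f x - a x) \<le> e/2" for x
      unfolding f_def using K(2,3) \<delta>(2)[OF K(4)]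
      by (intro norm_convex_combination_diff_le) (auto simp: dist_norm less_imp_le)
    then have "dist (Bcontfun f) a \<le> e/2"
      by (intro dist_bound) (simp add: f_apply dist_norm)
    then have "dist (Bcontfun f) a < e"
      using assms(2) by linarith
    moreover have "(\<Sum>p\<in>K. M * norm (a p))-lipschitz_on UNIV (apply_bcontfun (Bcontfun f))"
      using lip by (simp only: f_apply)
    ultimately show thesis
      by (rule that) (simp add: f_apply f_def)
  qed
qed

lemma lipn_less_top:
  assumes "equiv_norm nrm" and "L-lipschitz_on UNIV (apply_bcontfun f)"
  shows "lipn nrm (f :: 'x::metric_space \<Rightarrow>\<^sub>C 'b::real_normed_vector) < top"
proof -
  obtain C where C: "0 < C" "\<And>v. nrm v \<le> C * norm v"
    using assms(1) unfolding equiv_norm_def by blast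
  have "nrm (f x - f y) / dist x y \<le> C * L" if "x \<noteq> y" for x y
  proof -
    have "nrm (f x - f y) \<le> C * (L * dist x y)"
      using C lipschitz_onD[OF assms(2), of x y]
      by (intro order_trans[OF C(2)] mult_left_mono) (auto simp: dist_norm)
    then show ?thesis
      using that by (simp add: divide_le_eq mult.assoc)
  qed
  then have "lipn nrm f \<le> ennreal (C * L)"
    unfolding lipn_def by (intro SUP_least) (auto intro: ennreal_leI)
  then show ?thesis
    using ennreal_less_top le_less_trans by blast
qed

lemma Lip_q_less_top_iff: "Lip_q q cmult nrm \<mu> a < top \<longleftrightarrow> lipn nrm a < top"
proof -
  have "(INF b\<in>{b. scalar_valued cmult b}. ennreal (norm (a - b))) \<le> ennreal (norm (a - const_bcontfun (cmult 0 1)))"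
    by (rule INF_lower) (auto simp: scalar_valued_def)
  moreover have "(INF t. ennreal (norm (a - const_bcontfun (cmult t 1)))) \<le> ennreal (norm (a - const_bcontfun (cmult 0 1)))"
    by (rule INF_lower) simp
  ultimately show ?thesis
    by (cases q) (auto simp: Lip_q_def dest: le_less_trans[OF _ ennreal_less_top])
qed

lemma (in cstar_algebra) Lip_q_approximation:
  assumes "compact (UNIV :: 'x set)" and "equiv_norm nrm" and "0 < e"
  obtains f :: "'x::metric_space \<Rightarrow>\<^sub>C 'a" where "dist f a < e" and "Lip_q q cmult nrm \<mu> f < top"
    and "self_adjoint star a \<Longrightarrow> self_adjoint star f"
proof (rule lipschitz_approximation[OF assms(1,3), of a])
  fix f :: "'x \<Rightarrow>\<^sub>C 'a" and K and w :: "'x \<Rightarrow> 'x \<Rightarrow> real" and L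
  assume f: "dist f a < e" "L-lipschitz_on UNIV (apply_bcontfun f)"
    "\<And>x. apply_bcontfun f x = (\<Sum>p\<in>K. w p x *\<^sub>R apply_bcontfun a p)"
  show thesis
  proof (rule that[OF f(1)])
    show "Lip_q q cmult nrm \<mu> f < top"
      using Lip_q_less_top_iff lipn_less_top[OF assms(2) f(2)] by blast
    show "self_adjoint star f" if "self_adjoint star a"
      using that by (simp add: self_adjoint_def f(3) star.sum star_scaleR)
  qed
qed

theorem lemma2p6:
  fixes cmult :: "complex \<Rightarrow> 'a::{real_normed_algebra_1, banach} \<Rightarrow> 'a"
    and star :: "'a \<Rightarrow> 'a"
    and \<mu> :: "('x::metric_space \<Rightarrow>\<^sub>C 'a) \<Rightarrow> complex"
    and nrm :: "'a \<Rightarrow> real"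
    and q :: lip_kind
  assumes "compact (UNIV :: 'x set)"
    and "cstar_algebra cmult star"
    and "is_state cmult star \<mu>"
    and "equiv_norm nrm"
  shows "lower_semicont (Lip_q q cmult nrm \<mu>)
    \<and> closure {a. Lip_q q cmult nrm \<mu> a < top} = UNIV
    \<and> {a. self_adjoint star a}
        \<subseteq> closure {a. self_adjoint star a \<and> Lip_q q cmult nrm \<mu> a < top}"
proof -
  interpret cstar_state cmult star \<mu>
    using assms(1-3) by (simp add: cstar_state_def cstar_state_axioms_def)
  have approx: "\<exists>f. dist f a < e \<and> Lip_q q cmult nrm \<mu> f < top \<and> (self_adjoint star a \<longrightarrow> self_adjoint star f)"
    if "0 < e" for a e
    by (rule Lip_q_approximation[OF assms(1,4) that, of a q \<mu>]) blast
  then have "closure {a. Lip_q q cmult nrm \<mu> a < top} = UNIV"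
    by (fastforce simp: closure_approachable)
  moreover have "{a. self_adjoint star a} \<subseteq> closure {a. self_adjoint star a \<and> Lip_q q cmult nrm \<mu> a < top}"
    using approx by (fastforce simp: closure_approachable)
  ultimately show ?thesis
    using lower_semicont_Lip_q[OF assms(4)] by blast
qed

end
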